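(* If $a\ne 1$ and either $b\ne 0, c=0$ or $b=0, c\ne 0$, then $\check{f}$ has at most one root. Furthermore, exactly one of the following statements is true. 1. $\check{f}$ has exactly one root $x_0$ at which it changes sign. The derivative $\check{f}'$ is nonzero at $x_0$, and either $a>1,b>0,c=0$ or $a>1,b=0,c<0$ or $a<1,b<0,c=0$ or $a<1,b=0,c>0$. 2. $\check{f}$ has no root, and either $a<1,b>0,c=0$ or $a<1,b=0,c<0$ or $a>1,b<0,c=0$ or $a>1,b=0,c>0$.
   Context: A function $f:\mathbb{R}^+\to\mathbb{R}^+$ is called strongly hyperbolic if: (1) $\lim_{x\to 0+} f(x)=+\infty$ and $\lim_{x\to+\infty} f(x)=0$; (2) $f$ is strictly convex; (3) for each $b\in\mathbb{R}$, $\lim_{x\to+\infty} f(x+b)/f(x)=1$; (4) $f$ is differentiable; (5) $\ln|f'(x)|$ is strictly convex. Let $f$ be a strongly hyperbolic function, let $a>0$, $b,c\in\mathbb{R}$, and define $\check{f}:(\max\{-b,0\},\infty)\to\mathbb{R}$ by $\check{f}(x)=af(x+b)+c-f(x)$. *)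

theory Defs
  imports "HOL-Analysis.Analysis"
begin

definition strictly_convex_on :: "real set \<Rightarrow> (real \<Rightarrow> real) \<Rightarrow> bool" where
  "strictly_convex_on S g \<longleftrightarrow> convex S \<and>
     (\<forall>x\<in>S. \<forall>y\<in>S. \<forall>t::real. x \<noteq> y \<and> 0 < t \<and> t < 1 \<longrightarrow>
        g ((1 - t) * x + t * y) < (1 - t) * g x + t * g y)"

text \<open>Strongly hyperbolic functions \<open>f : \<real>\<^sup>+ \<rightarrow> \<real>\<^sup>+\<close>; only the values on \<open>(0,\<infinity>)\<close> matter.\<close>
definition strongly_hyperbolic :: "(real \<Rightarrow> real) \<Rightarrow> bool" where
  "strongly_hyperbolic f \<longleftrightarrow>
     (\<forall>x>0. f x > 0) \<and>
     filterlim f at_top (at_right 0) \<and>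
     (f \<longlongrightarrow> 0) at_top \<and>
     strictly_convex_on {0<..} f \<and>
     (\<forall>b. ((\<lambda>x. f (x + b) / f x) \<longlongrightarrow> 1) at_top) \<and>
     (\<forall>x>0. f differentiable (at x)) \<and>
     strictly_convex_on {0<..} (\<lambda>x. ln \<bar>deriv f x\<bar>)"

definition fcheck :: "(real \<Rightarrow> real) \<Rightarrow> real \<Rightarrow> real \<Rightarrow> real \<Rightarrow> real \<Rightarrow> real" where
  "fcheck f a b c x = a * f (x + b) + c - f x"

definition fcheck_dom :: "real \<Rightarrow> real set" where
  "fcheck_dom b = {max (- b) 0 <..}"

definition changes_sign_at :: "(real \<Rightarrow> real) \<Rightarrow> real \<Rightarrow> bool" where
  "changes_sign_at g x0 \<longleftrightarrow> (\<exists>e>0.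
     ((\<forall>x. x0 - e < x \<and> x < x0 \<longrightarrow> g x < 0) \<and> (\<forall>x. x0 < x \<and> x < x0 + e \<longrightarrow> g x > 0)) \<or>
     ((\<forall>x. x0 - e < x \<and> x < x0 \<longrightarrow> g x > 0) \<and> (\<forall>x. x0 < x \<and> x < x0 + e \<longrightarrow> g x < 0)))"

end

(*
  For b = 0 the equation fcheck f a b c x = 0 reads f x = c / (1 - a), and f decreases strictly
  from +oo to 0.  For c = 0 it reads ln f (x + b) - ln f x = - ln a, and the left-hand side has the
  nonzero derivative f'(x + b) / f (x + b) - f'(x) / f(x): the logarithmic derivative f'/f is
  strictly increasing because H = -f' is strictly log-convex, which gives
  H(y) * int_x^oo H < H(x) * int_y^oo H for x < y.  In both cases there is at most one root, and
  the derivative of fcheck does not vanish there, so fcheck changes sign.  A root exists by the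
  intermediate value theorem when fcheck has opposite signs near the left end of its domain and at
  infinity; in the remaining cases all summands of
  fcheck f a b c x = (a - 1) f (x + b) + (f (x + b) - f x) + c have the sign of a - 1.
*)
theory Submission
  imports Defs
begin

section \<open>Strict convexity\<close>

lemma strictly_convex_on_imp_convex_on:
  assumes "strictly_convex_on S g"
  shows "convex_on S g"
proof (rule convex_onI)
  show "convex S"
    using assms unfolding strictly_convex_on_def by blast
  fix t x y :: real
  assume "0 < t" "t < 1" "x \<in> S" "y \<in> S"
  then have "x \<noteq> y \<Longrightarrow> g ((1 - t) * x + t * y) < (1 - t) * g x + t * g y"
    using assms unfolding strictly_convex_on_def by blast
  then show "g ((1 - t) *\<^sub>R x + t *\<^sub>R y) \<le> (1 - t) * g x + t * g y"
    by (cases "x = y") (auto simp: algebra_simps)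
qed

lemma strictly_convex_on_slope_less:
  assumes g: "strictly_convex_on S g" and S: "p \<in> S" "r \<in> S" and pqr: "p < q" "q < r"
  shows "(g q - g p) / (q - p) < (g r - g p) / (r - p)"
    and "(g r - g p) / (r - p) < (g r - g q) / (r - q)"
proof -
  define t where "t = (q - p) / (r - p)"
  have t: "0 < t" "t < 1" and tr: "t * (r - p) = q - p"
    using pqr by (auto simp: t_def)
  then have q: "q = (1 - t) * p + t * r" and "(1 - t) * (r - p) = r - q"
    by (simp_all add: algebra_simps)
  have "g q < (1 - t) * g p + t * g r"
    using g S t pqr unfolding q strictly_convex_on_def by (metis less_irrefl order.strict_trans)
  then have "g q * (r - p) < ((1 - t) * g p + t * g r) * (r - p)"
    using pqr by (simp add: mult_strict_right_mono)
  also have "\<dots> = g p * ((1 - t) * (r - p)) + g r * (t * (r - p))"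
    by (simp add: algebra_simps)
  finally have key: "g q * (r - p) < g p * (r - q) + g r * (q - p)"
    by (simp only: tr \<open>(1 - t) * (r - p) = r - q\<close>)
  show "(g q - g p) / (q - p) < (g r - g p) / (r - p)"
    using key pqr by (simp add: field_simps)
  show "(g r - g p) / (r - p) < (g r - g q) / (r - q)"
    using key pqr by (simp add: field_simps)
qed

lemma strictly_convex_on_diff_less_shift:
  assumes g: "strictly_convex_on S g" and S: "p \<in> S" "q + s \<in> S" and pq: "p < q" "0 < s"
  shows "g q - g p < g (q + s) - g (p + s)"
proof -
  have "is_interval S"
    using g unfolding strictly_convex_on_def is_interval_convex_1 by blast
  then have "p + s \<in> S"
    by (rule mem_is_interval_1_I[OF _ S]) (use pq in linarith)+
  have "(g q - g p) / (q - p) < (g (q + s) - g p) / (q + s - p)"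
    using strictly_convex_on_slope_less(1)[OF g S, of q] pq by linarith
  also have "\<dots> < (g (q + s) - g (p + s)) / (q + s - (p + s))"
    using strictly_convex_on_slope_less(2)[OF g S, of "p + s"] pq by linarith
  finally show ?thesis
    using pq by (simp add: divide_less_cancel)
qed

lemma strictly_log_convex_mult_shift_less:
  assumes g: "strictly_convex_on S (\<lambda>x. ln (g x))" and pos: "\<And>x. x \<in> S \<Longrightarrow> g x > 0"
    and S: "p \<in> S" "q + s \<in> S" and pq: "p < q" "0 < s"
  shows "g q * g (p + s) < g (q + s) * g p"
proof -
  have "is_interval S"
    using g unfolding strictly_convex_on_def is_interval_convex_1 by blast
  then have "q \<in> S" and "p + s \<in> S"
    by (rule mem_is_interval_1_I[OF _ S]; use pq in linarith)+
  then have pos4: "g q > 0" "g (p + s) > 0" "g (q + s) > 0" "g p > 0"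
    using pos S by auto
  have "ln (g q) - ln (g p) < ln (g (q + s)) - ln (g (p + s))"
    using strictly_convex_on_diff_less_shift[OF g S pq] .
  then have "ln (g q * g (p + s)) < ln (g (q + s) * g p)"
    using pos4 by (simp add: ln_mult)
  then show ?thesis
    using pos4 by simp
qed

section \<open>Roots and sign changes of real functions\<close>

lemma changes_sign_at_uminus_iff: "changes_sign_at (\<lambda>x. - g x) x0 \<longleftrightarrow> changes_sign_at g x0"
  unfolding changes_sign_at_def neg_less_0_iff_less neg_0_less_iff_less by blast

lemma changes_sign_at_if_DERIV_nonzero:
  assumes "(g has_real_derivative d) (at x0)" "g x0 = 0" "d \<noteq> 0"
  shows "changes_sign_at g x0"
proof -
  have increasing: "changes_sign_at g x0"
    if der: "(g has_real_derivative d) (at x0)" and "g x0 = 0" "d > 0" for g d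
  proof -
    obtain e1 where "e1 > 0" and right: "\<And>h. 0 < h \<Longrightarrow> h < e1 \<Longrightarrow> g x0 < g (x0 + h)"
      using DERIV_pos_inc_right[OF der \<open>d > 0\<close>] by blast
    obtain e2 where "e2 > 0" and left: "\<And>h. 0 < h \<Longrightarrow> h < e2 \<Longrightarrow> g (x0 - h) < g x0"
      using DERIV_pos_inc_left[OF der \<open>d > 0\<close>] by blast
    show ?thesis
      unfolding changes_sign_at_def
    proof (intro exI[of _ "min e1 e2"] conjI disjI1 allI impI)
      fix x
      assume "x0 - min e1 e2 < x \<and> x < x0"
      then show "g x < 0"
        using left[of "x0 - x"] min.cobounded2[of e1 e2] \<open>g x0 = 0\<close> by simp
    next
      fix x
      assume "x0 < x \<and> x < x0 + min e1 e2"
      then show "g x > 0"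
        using right[of "x - x0"] min.cobounded1[of e1 e2] \<open>g x0 = 0\<close> by simp
    qed (use \<open>e1 > 0\<close> \<open>e2 > 0\<close> in simp)
  qed
  show ?thesis
  proof (cases "d > 0")
    case True
    then show ?thesis
      using increasing assms by blast
  next
    case False
    then have "changes_sign_at (\<lambda>x. - g x) x0"
      using increasing[OF DERIV_minus[OF assms(1)]] assms by simp
    then show ?thesis
      by (simp add: changes_sign_at_uminus_iff)
  qed
qed

lemma inj_on_if_DERIV_nonzero:
  fixes g :: "real \<Rightarrow> real"
  assumes S: "is_interval S"
    and deriv: "\<And>x. x \<in> S \<Longrightarrow> (g has_real_derivative g' x) (at x)"
    and nonzero: "\<And>x. x \<in> S \<Longrightarrow> g' x \<noteq> 0"
  shows "inj_on g S"
proof -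
  have "g u \<noteq> g v" if uv: "u \<in> S" "v \<in> S" "u < v" for u v
  proof
    assume "g u = g v"
    have sub: "{u..v} \<subseteq> S"
      using mem_is_interval_1_I[OF S uv(1,2)] by auto
    have "continuous_on {u..v} g"
      by (rule DERIV_continuous_on, rule has_field_derivative_at_within, rule deriv) (use sub in blast)
    moreover have "g differentiable (at z)" if "u < z" "z < v" for z
    proof -
      have "z \<in> S"
        using sub that by auto
      then show ?thesis
        using deriv unfolding real_differentiable_def by blast
    qed
    ultimately obtain z where z: "u < z" "z < v" "(g has_real_derivative 0) (at z)"
      using Rolle[OF \<open>u < v\<close> \<open>g u = g v\<close>] by blast
    then have "z \<in> S"
      using sub by auto
    then have "g' z = 0"
      using DERIV_unique[OF deriv z(3)] by simp
    with nonzero \<open>z \<in> S\<close> show False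
      by blast
  qed
  then show ?thesis
    by (intro inj_onI) (metis linorder_neqE_linordered_idom)
qed

lemma IVT_mult_nonpos:
  fixes F :: "real \<Rightarrow> real"
  assumes "x1 \<le> x2" "continuous_on {x1..x2} F" "F x1 * F x2 \<le> 0"
  obtains x where "x1 \<le> x" "x \<le> x2" "F x = 0"
  using IVT'[of F x1 0 x2] IVT2'[of F x2 0 x1] assms by (auto simp: mult_le_0_iff)

section \<open>Strongly hyperbolic functions\<close>

lemma
  assumes "strongly_hyperbolic f"
  shows strongly_hyperbolic_pos: "x > 0 \<Longrightarrow> f x > 0"
    and strongly_hyperbolic_has_deriv: "x > 0 \<Longrightarrow> (f has_real_derivative deriv f x) (at x)"
    and strongly_hyperbolic_at_right_0: "filterlim f at_top (at_right 0)"
    and strongly_hyperbolic_tendsto_0: "(f \<longlongrightarrow> 0) at_top"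
    and strongly_hyperbolic_shift_ratio_tendsto_1: "((\<lambda>x. f (x + b) / f x) \<longlongrightarrow> 1) at_top"
    and strongly_hyperbolic_strictly_convex: "strictly_convex_on {0<..} f"
    and strongly_hyperbolic_strictly_convex_ln_deriv:
      "strictly_convex_on {0<..} (\<lambda>x. ln \<bar>deriv f x\<bar>)"
  using assms unfolding strongly_hyperbolic_def by (auto simp: DERIV_deriv_iff_real_differentiable)

lemma strongly_hyperbolic_continuous_on:
  assumes "strongly_hyperbolic f" "S \<subseteq> {0<..}"
  shows "continuous_on S f"
  using assms
  by (intro continuous_at_imp_continuous_on ballI DERIV_isCont[OF strongly_hyperbolic_has_deriv]) auto

lemma strongly_hyperbolic_deriv_neg:
  assumes f: "strongly_hyperbolic f" and "x > 0"
  shows "deriv f x < 0"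
proof (rule ccontr)
  assume "\<not> deriv f x < 0"
  have tangent: "deriv f x * (y - x) \<le> f y - f x" if "y > 0" for y
    by (rule convex_on_imp_above_tangent[OF strictly_convex_on_imp_convex_on[OF
          strongly_hyperbolic_strictly_convex[OF f]]])
      (use \<open>x > 0\<close> that strongly_hyperbolic_has_deriv[OF f \<open>x > 0\<close>] in
        \<open>auto simp: interior_open intro: has_field_derivative_at_within\<close>)
  have "\<forall>\<^sub>F y in at_top. f y < f x \<and> x \<le> y"
    using order_tendstoD(2)[OF strongly_hyperbolic_tendsto_0[OF f] strongly_hyperbolic_pos[OF f \<open>x > 0\<close>]]
    by (intro eventually_conj eventually_ge_at_top)
  then obtain y where "f y < f x" "x \<le> y"
    using eventually_happens'[OF trivial_limit_at_top_linorder] by blast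
  with tangent[of y] \<open>x > 0\<close> \<open>\<not> deriv f x < 0\<close> show False
    using mult_nonneg_nonneg[of "deriv f x" "y - x"] by linarith
qed

lemma strongly_hyperbolic_strict_antimono:
  assumes "strongly_hyperbolic f" "0 < x" "x < y"
  shows "f y < f x"
  using assms by (intro DERIV_neg_imp_decreasing[of x y f])
    (auto intro!: exI[of _ "deriv f _"] strongly_hyperbolic_has_deriv strongly_hyperbolic_deriv_neg)

lemma strongly_hyperbolic_antimono:
  assumes "strongly_hyperbolic f" "0 < x" "x \<le> y"
  shows "f y \<le> f x"
  using strongly_hyperbolic_strict_antimono[OF assms(1,2)] assms(3) by (cases "x < y") (auto intro: less_imp_le)

lemma strongly_hyperbolic_exists_eq:
  assumes f: "strongly_hyperbolic f" and "v > 0"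
  obtains x where "x > 0" "f x = v"
proof -
  have "\<forall>\<^sub>F x in at_right 0. v < f x \<and> 0 < x"
    using strongly_hyperbolic_at_right_0[OF f]
    by (intro eventually_conj eventually_at_right_less) (simp add: filterlim_at_top_dense)
  then obtain x1 where x1: "v < f x1" "0 < x1"
    using eventually_happens'[OF trivial_limit_at_right_real] by blast
  have "\<forall>\<^sub>F x in at_top. f x < v \<and> x1 \<le> x"
    using order_tendstoD(2)[OF strongly_hyperbolic_tendsto_0[OF f] \<open>v > 0\<close>]
    by (intro eventually_conj eventually_ge_at_top)
  then obtain x2 where x2: "f x2 < v" "x1 \<le> x2"
    using eventually_happens'[OF trivial_limit_at_top_linorder] by blast
  have "continuous_on {x1..x2} f"
    using x1 by (intro strongly_hyperbolic_continuous_on[OF f]) auto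
  then obtain x where "x1 \<le> x" "f x = v"
    using IVT2'[of f x2 v x1] x1 x2 by auto
  then show thesis
    using that[of x] x1 by simp
qed

lemma strongly_hyperbolic_log_deriv_less:
  assumes f: "strongly_hyperbolic f" and xy: "0 < x" "x < y"
  shows "deriv f x / f x < deriv f y / f y"
proof -
  define H where "H z = \<bar>deriv f z\<bar>" for z
  have H: "H z = - deriv f z" "H z > 0" if "z > 0" for z
    using strongly_hyperbolic_deriv_neg[OF f that] by (auto simp: H_def)
  have H_shift: "H y * H (x + s) < H (y + s) * H x" if "s > 0" for s
    using strictly_log_convex_mult_shift_less[OF strongly_hyperbolic_strictly_convex_ln_deriv[OF f],
        folded H_def, of x y s] H(2) xy that by auto
  \<comment> \<open>\<open>\<psi> s\<close> strictly decreases to \<open>0\<close>, so \<open>\<psi> 0 > 0\<close>: this is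
    \<open>H y \<integral>\<^sub>x\<^sup>\<infinity> H < H x \<integral>\<^sub>y\<^sup>\<infinity> H\<close> without integrals.\<close>
  define \<psi> where "\<psi> s = H x * f (y + s) - H y * f (x + s)" for s
  have \<psi>_deriv: "(\<psi> has_real_derivative H y * H (x + s) - H x * H (y + s)) (at s)" if "s \<ge> 0" for s
  proof -
    have "(\<psi> has_real_derivative H x * deriv f (y + s) - H y * deriv f (x + s)) (at s)"
      unfolding \<psi>_def using xy that
      by (auto intro!: derivative_eq_intros DERIV_chain2[OF strongly_hyperbolic_has_deriv[OF f]])
    then show ?thesis
      using H(1)[of "x + s"] H(1)[of "y + s"] xy that by (simp add: algebra_simps)
  qed
  have \<psi>_decreasing: "\<exists>d. (\<psi> has_real_derivative d) (at s) \<and> d < 0" if "s > 0" for s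
    using \<psi>_deriv[of s] H_shift[OF that] that by (intro exI conjI) (auto simp: mult.commute)
  have f_shift_tendsto_0: "((\<lambda>s. f (z + s)) \<longlongrightarrow> 0) at_top" for z
    by (rule filterlim_compose[OF strongly_hyperbolic_tendsto_0[OF f]])
      (rule filterlim_tendsto_add_at_top[OF tendsto_const filterlim_ident])
  then have "(\<psi> \<longlongrightarrow> 0) at_top"
    unfolding \<psi>_def
    using tendsto_diff[OF tendsto_mult_right_zero tendsto_mult_right_zero, OF f_shift_tendsto_0 f_shift_tendsto_0]
    by simp
  then have "0 < \<psi> 1"
    by (rule DERIV_neg_imp_decreasing_at_top[rotated]) (use \<psi>_decreasing in auto)
  also have "\<psi> 1 < \<psi> 0"
  proof (rule DERIV_neg_imp_decreasing_open[of 0 1 \<psi>])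
    show "continuous_on {0..1} \<psi>"
      by (rule DERIV_continuous_on, rule has_field_derivative_at_within, rule \<psi>_deriv) auto
  qed (use \<psi>_decreasing in auto)
  finally have "H y * f x < H x * f y"
    unfolding \<psi>_def by simp
  then have "deriv f y * f x > deriv f x * f y"
    using H(1) xy by simp
  then show ?thesis
    using strongly_hyperbolic_pos[OF f] xy by (simp add: field_simps)
qed

lemma strongly_hyperbolic_log_deriv_neq:
  assumes "strongly_hyperbolic f" "0 < x" "0 < y" "x \<noteq> y"
  shows "deriv f x / f x \<noteq> deriv f y / f y"
  using strongly_hyperbolic_log_deriv_less[OF assms(1)] assms(2-4)
  by (metis less_irrefl linorder_neqE_linordered_idom)

section \<open>Roots of fcheck\<close>

lemma fcheck_dom_iff: "x \<in> fcheck_dom b \<longleftrightarrow> 0 < x \<and> 0 < x + b"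
  unfolding fcheck_dom_def by auto

lemma is_interval_fcheck_dom: "is_interval (fcheck_dom b)"
  unfolding fcheck_dom_def by (rule is_interval_oi)

lemma fcheck_has_derivative:
  assumes f: "strongly_hyperbolic f" and x: "x \<in> fcheck_dom b"
  shows "(fcheck f a b c has_real_derivative a * deriv f (x + b) - deriv f x) (at x)"
proof -
  have "((\<lambda>x. f (x + b)) has_real_derivative deriv f (x + b)) (at x)"
    using x by (simp add: DERIV_shift[symmetric] fcheck_dom_iff strongly_hyperbolic_has_deriv[OF f])
  then show ?thesis
    unfolding fcheck_def[abs_def] using x
    by (auto intro!: derivative_eq_intros strongly_hyperbolic_has_deriv[OF f] simp: fcheck_dom_iff)
qed

lemma continuous_on_fcheck:
  assumes "strongly_hyperbolic f" "S \<subseteq> fcheck_dom b"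
  shows "continuous_on S (fcheck f a b c)"
  using assms by (intro continuous_at_imp_continuous_on ballI DERIV_isCont[OF fcheck_has_derivative]) auto

lemma sgn_fcheck:
  assumes f: "strongly_hyperbolic f" and x: "x \<in> fcheck_dom b"
    and abc: "(a < 1 \<and> 0 \<le> b \<and> c \<le> 0) \<or> (a > 1 \<and> b \<le> 0 \<and> 0 \<le> c)"
  shows "sgn (fcheck f a b c x) = sgn (a - 1)"
proof -
  have pos: "f (x + b) > 0"
    using x by (simp add: fcheck_dom_iff strongly_hyperbolic_pos[OF f])
  have mono: "b \<ge> 0 \<Longrightarrow> f (x + b) \<le> f x" "b \<le> 0 \<Longrightarrow> f x \<le> f (x + b)"
    using x by (auto simp: fcheck_dom_iff intro: strongly_hyperbolic_antimono[OF f])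
  have split: "fcheck f a b c x = (a - 1) * f (x + b) + (f (x + b) - f x) + c"
    unfolding fcheck_def by (simp add: algebra_simps)
  from abc consider "a < 1" "b \<ge> 0" "c \<le> 0" | "a > 1" "b \<le> 0" "c \<ge> 0"
    by linarith
  then show ?thesis
  proof cases
    case 1
    then have "(a - 1) * f (x + b) < 0"
      using pos by (simp add: mult_neg_pos)
    with 1 mono have "fcheck f a b c x < 0"
      unfolding split by linarith
    with 1 show ?thesis
      by simp
  next
    case 2
    then have "(a - 1) * f (x + b) > 0"
      using pos by simp
    with 2 mono have "fcheck f a b c x > 0"
      unfolding split by linarith
    with 2 show ?thesis
      by simp
  qed
qed

lemma fcheck_sgn_near_boundary:
  assumes f: "strongly_hyperbolic f" and a: "a > 0" and "b \<noteq> 0"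
  obtains x where "x \<in> fcheck_dom b" "sgn (fcheck f a b c x) = - sgn b"
proof (cases "b > 0")
  case True
  obtain x where x: "x > 0" "f x = 1 + \<bar>a * f b + c\<bar>"
    by (rule strongly_hyperbolic_exists_eq[OF f, where v = "1 + \<bar>a * f b + c\<bar>"]) simp_all
  have "a * f (x + b) < a * f b"
    using strongly_hyperbolic_strict_antimono[OF f True, of "x + b"] x a by simp
  then have "fcheck f a b c x < 0"
    using x abs_ge_self[of "a * f b + c"] unfolding fcheck_def by linarith
  moreover have "x \<in> fcheck_dom b"
    using x True by (simp add: fcheck_dom_iff)
  ultimately show ?thesis
    using True that by simp
next
  case False
  then have b: "b < 0"
    using \<open>b \<noteq> 0\<close> by simp
  obtain t where t: "t > 0" "f t = (1 + \<bar>f (- b) - c\<bar>) / a"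
    by (rule strongly_hyperbolic_exists_eq[OF f, where v = "(1 + \<bar>f (- b) - c\<bar>) / a"]) (use a in simp_all)
  have "a * f t > f (- b) - c"
    using a t abs_ge_self[of "f (- b) - c"] by simp
  moreover have "f (t - b) < f (- b)"
    using strongly_hyperbolic_strict_antimono[OF f, of "- b" "t - b"] b t by simp
  ultimately have "fcheck f a b c (t - b) > 0"
    unfolding fcheck_def by simp
  moreover have "t - b \<in> fcheck_dom b"
    using t b by (simp add: fcheck_dom_iff)
  ultimately show ?thesis
    using b that by simp
qed

lemma fcheck_eventually_sgn:
  assumes f: "strongly_hyperbolic f" and "a \<noteq> 1"
  shows "\<forall>\<^sub>F x in at_top. sgn (fcheck f a b 0 x) = sgn (a - 1)"
proof -
  have "((\<lambda>x. (a * (f (x + b) / f x) - 1) * (a - 1)) \<longlongrightarrow> (a * 1 - 1) * (a - 1)) at_top"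
    by (intro tendsto_intros strongly_hyperbolic_shift_ratio_tendsto_1[OF f])
  moreover have "(a * 1 - 1) * (a - 1) > 0"
    using \<open>a \<noteq> 1\<close> by (auto simp: zero_less_mult_iff)
  ultimately have "\<forall>\<^sub>F x in at_top. 0 < (a * (f (x + b) / f x) - 1) * (a - 1)"
    by (rule order_tendstoD(1))
  then show ?thesis
    using eventually_gt_at_top[of "max (- b) 0"]
  proof eventually_elim
    case (elim x)
    then have "f x > 0"
      by (simp add: strongly_hyperbolic_pos[OF f])
    then have "fcheck f a b 0 x = f x * (a * (f (x + b) / f x) - 1)"
      unfolding fcheck_def by (simp add: field_simps)
    with elim \<open>f x > 0\<close> show ?case
      by (auto simp: sgn_mult zero_less_mult_iff sgn_if)
  qed
qed

lemma fcheck_root_exists: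
  assumes f: "strongly_hyperbolic f" and a: "a > 0"
    and abc: "(a > 1 \<and> b > 0 \<and> c = 0) \<or> (a > 1 \<and> b = 0 \<and> c < 0) \<or>
      (a < 1 \<and> b < 0 \<and> c = 0) \<or> (a < 1 \<and> b = 0 \<and> c > 0)"
  shows "\<exists>x\<in>fcheck_dom b. fcheck f a b c x = 0"
proof (cases "b = 0")
  case True
  have "c / (1 - a) > 0"
    using abc True by (auto simp: zero_less_divide_iff)
  then obtain x where "x > 0" "f x = c / (1 - a)"
    using strongly_hyperbolic_exists_eq[OF f] by blast
  moreover have "a \<noteq> 1"
    using abc by auto
  ultimately show ?thesis
    using True by (intro bexI[of _ x]) (auto simp: fcheck_def fcheck_dom_iff field_simps)
next
  case False
  then have "c = 0" "sgn (a - 1) = sgn b" "a \<noteq> 1"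
    using abc by auto
  obtain x1 where x1: "x1 \<in> fcheck_dom b" "sgn (fcheck f a b c x1) = - sgn b"
    using fcheck_sgn_near_boundary[OF f a False] by blast
  have "\<forall>\<^sub>F x in at_top. sgn (fcheck f a b c x) = sgn b \<and> x1 \<le> x"
    using fcheck_eventually_sgn[OF f \<open>a \<noteq> 1\<close>, of b] eventually_ge_at_top[of x1]
    unfolding \<open>c = 0\<close> \<open>sgn (a - 1) = sgn b\<close> by (rule eventually_conj)
  then obtain x2 where x2: "sgn (fcheck f a b c x2) = sgn b" "x1 \<le> x2"
    using eventually_happens'[OF trivial_limit_at_top_linorder] by blast
  have sub: "{x1..x2} \<subseteq> fcheck_dom b"
    using x1(1) by (auto simp: fcheck_dom_iff)
  have "fcheck f a b c x1 * fcheck f a b c x2 \<le> 0"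
    using x1(2) x2(1) False
    by (cases "b > 0") (auto simp: sgn_1_pos sgn_1_neg mult_neg_pos mult_pos_neg less_imp_le)
  then obtain x where "x1 \<le> x" "x \<le> x2" "fcheck f a b c x = 0"
    using IVT_mult_nonpos[OF x2(2) continuous_on_fcheck[OF f sub]] by blast
  with sub show ?thesis
    by auto
qed

lemma fcheck_root_unique:
  assumes f: "strongly_hyperbolic f" and a: "a > 0" "a \<noteq> 1"
    and bc: "(b \<noteq> 0 \<and> c = 0) \<or> (b = 0 \<and> c \<noteq> 0)"
    and xy: "x \<in> fcheck_dom b" "y \<in> fcheck_dom b" "fcheck f a b c x = 0" "fcheck f a b c y = 0"
  shows "x = y"
proof (cases "b = 0")
  case True
  have "inj_on f {0<..}"
  proof (rule inj_on_if_DERIV_nonzero[OF is_interval_oi])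
    fix x :: real
    assume "x \<in> {0<..}"
    then show "(f has_real_derivative deriv f x) (at x)" "deriv f x \<noteq> 0"
      using strongly_hyperbolic_has_deriv[OF f] strongly_hyperbolic_deriv_neg[OF f] by force+
  qed
  have "f z = c / (1 - a)" if "fcheck f a 0 c z = 0" for z
    using that a unfolding fcheck_def by (simp add: field_simps)
  then have "f x = f y"
    using xy True by simp
  with \<open>inj_on f {0<..}\<close> show ?thesis
    using xy True by (simp add: fcheck_dom_iff inj_on_def)
next
  case False
  define \<phi> where "\<phi> x = ln (f (x + b)) - ln (f x)" for x
  have pos: "f x > 0" "f (x + b) > 0" if "x \<in> fcheck_dom b" for x
    using that by (auto simp: fcheck_dom_iff strongly_hyperbolic_pos[OF f])
  have inj: "inj_on \<phi> (fcheck_dom b)"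
  proof (rule inj_on_if_DERIV_nonzero[OF is_interval_fcheck_dom])
    fix x
    assume x: "x \<in> fcheck_dom b"
    have "((\<lambda>x. f (x + b)) has_real_derivative deriv f (x + b)) (at x)"
      using x by (simp add: DERIV_shift[symmetric] fcheck_dom_iff strongly_hyperbolic_has_deriv[OF f])
    then show "(\<phi> has_real_derivative deriv f (x + b) / f (x + b) - deriv f x / f x) (at x)"
      unfolding \<phi>_def using x pos[OF x]
      by (auto intro!: derivative_eq_intros strongly_hyperbolic_has_deriv[OF f] simp: fcheck_dom_iff)
    show "deriv f (x + b) / f (x + b) - deriv f x / f x \<noteq> 0"
      using strongly_hyperbolic_log_deriv_neq[OF f, of "x + b" x] x False by (simp add: fcheck_dom_iff)
  qed
  have "\<phi> z = - ln a" if "z \<in> fcheck_dom b" "fcheck f a b c z = 0" for z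
  proof -
    have "ln (f z) = ln (a * f (z + b))"
      using that False bc unfolding fcheck_def by simp
    also have "\<dots> = ln a + ln (f (z + b))"
      using a pos[OF that(1)] by (simp add: ln_mult)
    finally show ?thesis
      unfolding \<phi>_def by simp
  qed
  then have "\<phi> x = \<phi> y"
    using xy by simp
  then show ?thesis
    using inj_onD[OF inj _ xy(1,2)] by blast
qed

lemma fcheck_no_root:
  assumes f: "strongly_hyperbolic f"
    and abc: "(a < 1 \<and> b > 0 \<and> c = 0) \<or> (a < 1 \<and> b = 0 \<and> c < 0) \<or>
      (a > 1 \<and> b < 0 \<and> c = 0) \<or> (a > 1 \<and> b = 0 \<and> c > 0)"
    and x: "x \<in> fcheck_dom b"
  shows "fcheck f a b c x \<noteq> 0"
proof -
  have "(a < 1 \<and> 0 \<le> b \<and> c \<le> 0) \<or> (a > 1 \<and> b \<le> 0 \<and> 0 \<le> c)"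
    using abc by auto
  then have "sgn (fcheck f a b c x) = sgn (a - 1)"
    by (rule sgn_fcheck[OF f x])
  moreover have "a \<noteq> 1"
    using abc by auto
  ultimately show ?thesis
    by (auto simp: sgn_eq_0_iff)
qed

lemma fcheck_root_transversal:
  assumes f: "strongly_hyperbolic f" and a: "a > 0" "a \<noteq> 1"
    and bc: "(b \<noteq> 0 \<and> c = 0) \<or> (b = 0 \<and> c \<noteq> 0)"
    and x: "x \<in> fcheck_dom b" "fcheck f a b c x = 0"
  shows "changes_sign_at (fcheck f a b c) x \<and> deriv (fcheck f a b c) x \<noteq> 0"
proof -
  have "a * deriv f (x + b) - deriv f x \<noteq> 0"
  proof (cases "b = 0")
    case True
    then show ?thesis
      using strongly_hyperbolic_deriv_neg[OF f, of x] x a by (simp add: fcheck_dom_iff algebra_simps)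
  next
    case False
    have pos: "f x > 0" "f (x + b) > 0"
      using x by (auto simp: fcheck_dom_iff strongly_hyperbolic_pos[OF f])
    have "a = f x / f (x + b)"
      using x False bc pos unfolding fcheck_def by (simp add: field_simps)
    then have "a * deriv f (x + b) - deriv f x =
        f x * (deriv f (x + b) / f (x + b) - deriv f x / f x)"
      using pos by (simp add: field_simps)
    moreover have "deriv f (x + b) / f (x + b) \<noteq> deriv f x / f x"
      using strongly_hyperbolic_log_deriv_neq[OF f, of "x + b" x] x False by (simp add: fcheck_dom_iff)
    ultimately show ?thesis
      using pos by simp
  qed
  moreover note deriv = fcheck_has_derivative[OF f x(1), where a = a and c = c]
  ultimately show ?thesis
    using changes_sign_at_if_DERIV_nonzero[OF deriv x(2)] DERIV_imp_deriv[OF deriv] by simp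
qed

lemma unique_root_dichotomy:
  fixes F :: "real \<Rightarrow> real"
  assumes unique: "\<And>x y. x \<in> D \<Longrightarrow> y \<in> D \<Longrightarrow> F x = 0 \<Longrightarrow> F y = 0 \<Longrightarrow> x = y"
    and root: "\<And>x. x \<in> D \<Longrightarrow> F x = 0 \<Longrightarrow> P x \<and> Q x"
    and exists: "C \<Longrightarrow> \<exists>x\<in>D. F x = 0"
    and none: "\<And>x. C' \<Longrightarrow> x \<in> D \<Longrightarrow> F x \<noteq> 0"
    and exclusive: "C' \<longleftrightarrow> \<not> C"
  shows "(\<forall>x\<in>D. \<forall>y\<in>D. F x = 0 \<and> F y = 0 \<longrightarrow> x = y) \<and>
    ((\<exists>x0. {x \<in> D. F x = 0} = {x0} \<and> P x0 \<and> Q x0 \<and> C) \<noteq> ({x \<in> D. F x = 0} = {} \<and> C'))"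
proof (cases C)
  case True
  then obtain x0 where "x0 \<in> D" "F x0 = 0"
    using exists by blast
  with unique have "{x \<in> D. F x = 0} = {x0}"
    by blast
  with True exclusive unique root \<open>x0 \<in> D\<close> \<open>F x0 = 0\<close> show ?thesis
    by blast
next
  case False
  with unique none exclusive show ?thesis
    by blast
qed

lemma root_conditions_complementary:
  fixes a b c :: real
  assumes "a \<noteq> 1" and "(b \<noteq> 0 \<and> c = 0) \<or> (b = 0 \<and> c \<noteq> 0)"
  shows "((a < 1 \<and> b > 0 \<and> c = 0) \<or> (a < 1 \<and> b = 0 \<and> c < 0) \<or>
      (a > 1 \<and> b < 0 \<and> c = 0) \<or> (a > 1 \<and> b = 0 \<and> c > 0)) \<longleftrightarrow>
    \<not> ((a > 1 \<and> b > 0 \<and> c = 0) \<or> (a > 1 \<and> b = 0 \<and> c < 0) \<or>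
      (a < 1 \<and> b < 0 \<and> c = 0) \<or> (a < 1 \<and> b = 0 \<and> c > 0))"
  using assms by (cases "a < 1"; cases "b = 0") (auto simp: neq_iff)

theorem lemma3p4:
  fixes f :: "real \<Rightarrow> real" and a b c :: real
  assumes hf: "strongly_hyperbolic f"
    and ha: "a > 0"
    and ha1: "a \<noteq> 1"
    and hbc: "(b \<noteq> 0 \<and> c = 0) \<or> (b = 0 \<and> c \<noteq> 0)"
  shows "(\<forall>x\<in>fcheck_dom b. \<forall>y\<in>fcheck_dom b.
            fcheck f a b c x = 0 \<and> fcheck f a b c y = 0 \<longrightarrow> x = y)
    \<and> ((\<exists>x0. {x \<in> fcheck_dom b. fcheck f a b c x = 0} = {x0}
              \<and> changes_sign_at (fcheck f a b c) x0
              \<and> deriv (fcheck f a b c) x0 \<noteq> 0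
              \<and> ((a > 1 \<and> b > 0 \<and> c = 0) \<or> (a > 1 \<and> b = 0 \<and> c < 0) \<or>
                 (a < 1 \<and> b < 0 \<and> c = 0) \<or> (a < 1 \<and> b = 0 \<and> c > 0)))
       \<noteq>
       ({x \<in> fcheck_dom b. fcheck f a b c x = 0} = {}
              \<and> ((a < 1 \<and> b > 0 \<and> c = 0) \<or> (a < 1 \<and> b = 0 \<and> c < 0) \<or>
                 (a > 1 \<and> b < 0 \<and> c = 0) \<or> (a > 1 \<and> b = 0 \<and> c > 0))))"
  by (rule unique_root_dichotomy)
    (assumption | rule fcheck_root_unique[OF hf ha ha1 hbc] fcheck_root_transversal[OF hf ha ha1 hbc]
      fcheck_root_exists[OF hf ha] fcheck_no_root[OF hf] root_conditions_complementary[OF ha1 hbc])+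

end
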